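(* Let $A\in\mathbb{R}^{n\times n}$, $B_i\in\mathbb{R}^{n\times p_i}$, $C_i\in\mathbb{R}^{q_i\times n}$, $i\in\{1,\dots,m\}$, define a jointly controllable and jointly observable $m$-channel linear system, let the neighbor graph $\mathbb{N}$ on $\{1,\dots,m\}$ be strongly connected, and let $F_i\in\mathbb{R}^{p_i\times n}$ be arbitrary. Let $b_i$ be the $i$th unit vector of $\mathbb{R}^m$ and define $\tilde A = I_{m}\otimes\big(A+\sum_{j=1}^m B_jF_j\big) - Q$, where $Q$ is the $nm\times nm$ block matrix whose $(i,j)$th $n\times n$ block is $B_jF_j$; $\tilde B_i = b_i\otimes I_n$; $\hat C_i = C_i\tilde B_i'$; $\tilde C_i = \mathrm{column}\{C_{ij^i_1},\dots,C_{ij^i_{m_i}}\}$ where $\{j^i_1,\dots,j^i_{m_i}\}=\mathcal{N}_i$ and $C_{ij}=(b_i'-b_j')\otimes I_n$. Then the $m$-channel linear system $$\dot\epsilon = \tilde A\epsilon + \sum_{j=1}^m\tilde B_j\tilde v_j,\qquad \tilde y_i = \begin{bmatrix}\hat C_i\\ \tilde C_i\end{bmatrix}\epsilon,\quad i\in\{1,\dots,m\},$$ is jointly controllable and jointly observable.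
   Context: An $m$-channel system $\{A,B_i,C_i;m\}$ is jointly controllable if $(A,[B_1\ \cdots\ B_m])$ is controllable and jointly observable if $(\mathrm{column}\{C_1,\dots,C_m\},A)$ is observable. The neighbor graph has an arc $j\to i$ iff $j$ is a neighbor of $i$; $\mathcal{N}_i$ is the set of neighbors of $i$ including $i$. $'$ denotes transpose and $\otimes$ the Kronecker product. *)

theory Defs
  imports "Jordan_Normal_Form.DL_Rank"
begin

definition hcat :: "real mat \<Rightarrow> real mat \<Rightarrow> real mat" where
  "hcat M1 M2 = four_block_mat M1 M2 (0\<^sub>m 0 (dim_col M1)) (0\<^sub>m 0 (dim_col M2))"

definition vcat :: "real mat \<Rightarrow> real mat \<Rightarrow> real mat" where
  "vcat M1 M2 = four_block_mat M1 (0\<^sub>m (dim_row M1) 0) M2 (0\<^sub>m (dim_row M2) 0)"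

definition hcat_list :: "nat \<Rightarrow> real mat list \<Rightarrow> real mat" where
  "hcat_list r Ms = foldr hcat Ms (0\<^sub>m r 0)"

definition vcat_list :: "nat \<Rightarrow> real mat list \<Rightarrow> real mat" where
  "vcat_list c Ms = foldr vcat Ms (0\<^sub>m 0 c)"

definition kron :: "real mat \<Rightarrow> real mat \<Rightarrow> real mat" where
  "kron M N = mat (dim_row M * dim_row N) (dim_col M * dim_col N)
     (\<lambda>(i,j). M $$ (i div dim_row N, j div dim_col N) * N $$ (i mod dim_row N, j mod dim_col N))"

definition controllable :: "real mat \<Rightarrow> real mat \<Rightarrow> bool" where
  "controllable A B \<longleftrightarrow>
     vec_space.rank (dim_row A) (hcat_list (dim_row A) (map (\<lambda>k. A ^\<^sub>m k * B) [0..<dim_row A]))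
       = dim_row A"

definition observable :: "real mat \<Rightarrow> real mat \<Rightarrow> bool" where
  "observable C A \<longleftrightarrow>
     (let Ob = vcat_list (dim_row A) (map (\<lambda>k. C * A ^\<^sub>m k) [0..<dim_row A])
      in vec_space.rank (dim_row Ob) Ob = dim_row A)"

(* m-channel system {A, B_i, C_i; m}, channels indexed 0..<m *)
definition jointly_controllable :: "real mat \<Rightarrow> (nat \<Rightarrow> real mat) \<Rightarrow> nat \<Rightarrow> bool" where
  "jointly_controllable A B m \<longleftrightarrow> controllable A (hcat_list (dim_row A) (map B [0..<m]))"

definition jointly_observable :: "real mat \<Rightarrow> (nat \<Rightarrow> real mat) \<Rightarrow> nat \<Rightarrow> bool" where
  "jointly_observable A C m \<longleftrightarrow> observable (vcat_list (dim_col A) (map C [0..<m])) A"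

(* neighbor graph: nbr i = N_i (neighbors of i, including i); arc j \<rightarrow> i iff j \<in> nbr i, j \<noteq> i *)
definition nbr_arcs :: "nat \<Rightarrow> (nat \<Rightarrow> nat set) \<Rightarrow> (nat \<times> nat) set" where
  "nbr_arcs m nbr = {(j, i). i < m \<and> j < m \<and> j \<in> nbr i \<and> j \<noteq> i}"

definition strongly_connected :: "nat \<Rightarrow> (nat \<Rightarrow> nat set) \<Rightarrow> bool" where
  "strongly_connected m nbr \<longleftrightarrow> (\<forall>i<m. \<forall>j<m. (i, j) \<in> (nbr_arcs m nbr)\<^sup>*)"

definition unitv :: "nat \<Rightarrow> nat \<Rightarrow> real mat" where
  "unitv m i = mat m 1 (\<lambda>(r, _). if r = i then 1 else 0)"

definition tA :: "nat \<Rightarrow> nat \<Rightarrow> real mat \<Rightarrow> (nat \<Rightarrow> real mat) \<Rightarrow> (nat \<Rightarrow> real mat) \<Rightarrow> real mat" where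
  "tA n m A B F =
     kron (1\<^sub>m m) (A + foldr (+) (map (\<lambda>j. B j * F j) [0..<m]) (0\<^sub>m n n))
     - mat (n * m) (n * m) (\<lambda>(r, c). (B (c div n) * F (c div n)) $$ (r mod n, c mod n))"

definition tB :: "nat \<Rightarrow> nat \<Rightarrow> nat \<Rightarrow> real mat" where
  "tB n m i = kron (unitv m i) (1\<^sub>m n)"

definition hC :: "nat \<Rightarrow> nat \<Rightarrow> (nat \<Rightarrow> real mat) \<Rightarrow> nat \<Rightarrow> real mat" where
  "hC n m C i = C i * transpose_mat (tB n m i)"

definition Cij :: "nat \<Rightarrow> nat \<Rightarrow> nat \<Rightarrow> nat \<Rightarrow> real mat" where
  "Cij n m i j = kron (transpose_mat (unitv m i) - transpose_mat (unitv m j)) (1\<^sub>m n)"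

definition tC :: "nat \<Rightarrow> nat \<Rightarrow> (nat \<Rightarrow> nat set) \<Rightarrow> nat \<Rightarrow> real mat" where
  "tC n m nbr i = vcat_list (n * m) (map (Cij n m i) (sorted_list_of_set (nbr i)))"

end

theory Submission
  imports Defs
begin

text \<open>
  The input matrices \<open>tB i = b\<^sub>i \<otimes> I\<^sub>n\<close> stack to the identity \<open>I\<^sub>n\<^sub>m\<close>, so the Kalman
  matrix of the augmented system begins with an identity block and joint controllability
  holds whatever \<open>tA\<close> is.

  For joint observability let \<open>\<epsilon>\<close> lie in the unobservable subspace. The rows
  \<open>C\<^sub>i\<^sub>j = (b\<^sub>i' - b\<^sub>j') \<otimes> I\<^sub>n\<close> force the \<open>n\<close>-blocks of \<open>\<epsilon>\<close> at neighbouring agents to agree,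
  so by strong connectivity \<open>\<epsilon> = 1\<^sub>m \<otimes> z\<close>. On such consensus vectors \<open>tA\<close> acts as \<open>A\<close>:
  in every block row the Kronecker term contributes \<open>A + \<Sum>\<^sub>j B\<^sub>j F\<^sub>j\<close> once and \<open>Q\<close>
  subtracts \<open>B\<^sub>j F\<^sub>j\<close> for every \<open>j\<close>. Hence the output \<open>hC i\<close> of \<open>tA\<^sup>k \<epsilon>\<close> is
  \<open>C\<^sub>i A\<^sup>k z\<close>, which vanishes for all \<open>i\<close> and \<open>k\<close>, and joint observability of
  \<open>(C, A)\<close> gives \<open>z = 0\<close>.
\<close>

section \<open>Block coordinates\<close>

lemma block_indexE:
  fixes r n m :: nat
  assumes "r < n * m"
  obtains i t where "i < m" "t < n" "r = i * n + t"
proof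
  have "n > 0" using assms by (cases n) auto
  then show "r mod n < n" by simp
  show "r div n < m" using assms by (simp add: less_mult_imp_div_less mult.commute)
  show "r = r div n * n + r mod n" by simp
qed

lemma block_index_less:
  fixes i t n m :: nat
  assumes "i < m" "t < n"
  shows "i * n + t < n * m"
proof -
  have "i * n + t < Suc i * n" using assms(2) by simp
  also have "\<dots> \<le> m * n" using assms(1) by (intro mult_le_mono1) simp
  finally show ?thesis by (simp add: mult.commute)
qed

lemma block_index_eq_iff:
  fixes i j s t n :: nat
  assumes "t < n" "s < n"
  shows "i * n + t = j * n + s \<longleftrightarrow> i = j \<and> t = s"
proof
  assume eq: "i * n + t = j * n + s"
  have "i = (i * n + t) div n" "t = (i * n + t) mod n"
    "j = (j * n + s) div n" "s = (j * n + s) mod n" using assms by simp_all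
  then show "i = j \<and> t = s" unfolding eq by metis
qed simp

lemma sum_blocks:
  fixes g :: "nat \<Rightarrow> 'a::comm_monoid_add"
  shows "(\<Sum>c<n * m. g c) = (\<Sum>j<m. \<Sum>s<n. g (j * n + s))"
proof -
  have "(\<Sum>c<n * m. g c) = (\<Sum>j<m. sum g {j * n..<j * n + n})"
    using sum.nat_group[of g n m] by (simp add: mult.commute)
  also have "\<dots> = (\<Sum>j<m. \<Sum>s<n. g (j * n + s))"
    by (simp add: sum.atLeastLessThan_shift_0[of g] atLeast0LessThan add.commute)
  finally show ?thesis .
qed

lemma eq_vec_blocksI:
  assumes "x \<in> carrier_vec (n * m)" "y \<in> carrier_vec (n * m)"
    and "\<And>i t. i < m \<Longrightarrow> t < n \<Longrightarrow> x $ (i * n + t) = y $ (i * n + t)"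
  shows "x = y"
  using assms by (intro eq_vecI) (auto elim: block_indexE)

lemma mult_mat_vec_blocks:
  assumes "dim_col M = n * m" "y \<in> carrier_vec (n * m)" "r < dim_row M"
  shows "(M *\<^sub>v y) $ r = (\<Sum>j<m. \<Sum>s<n. M $$ (r, j * n + s) * y $ (j * n + s))"
  using assms by (simp add: scalar_prod_def atLeast0LessThan sum_blocks)

lemma kron_carrier: "kron M N \<in> carrier_mat (dim_row M * dim_row N) (dim_col M * dim_col N)"
  by (simp add: kron_def)

lemma kron_index_blocks:
  assumes "M \<in> carrier_mat a b" "N \<in> carrier_mat n n'"
    and "i < a" "j < b" "s < n" "t < n'"
  shows "kron M N $$ (i * n + s, j * n' + t) = M $$ (i, j) * N $$ (s, t)"
proof -
  have "i * n + s < a * n" "j * n' + t < b * n'"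
    using block_index_less[of i a s n] block_index_less[of j b t n'] assms
    by (simp_all add: mult.commute)
  then show ?thesis using assms by (simp add: kron_def)
qed

section \<open>Rank and the Kalman criteria\<close>

lemma (in vec_space) maximal_indpt_subset_cols_exists:
  "\<exists>S. maximal S (\<lambda>T. T \<subseteq> set (cols A) \<and> lin_indpt T)"
  using maximal_exists[of "\<lambda>T. T \<subseteq> set (cols A) \<and> lin_indpt T" "card (set (cols A))" "{}"]
  by (meson List.finite_set card_mono empty_iff empty_subsetI finite_lin_indpt2 rev_finite_subset)

lemma (in vec_space) rank_le_nr:
  assumes "A \<in> carrier_mat n nc"
  shows "rank A \<le> n"
proof -
  obtain S where S: "maximal S (\<lambda>T. T \<subseteq> set (cols A) \<and> lin_indpt T)"
    using maximal_indpt_subset_cols_exists by blast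
  then have "S \<subseteq> carrier_vec n" "lin_indpt S"
    using assms cols_dim[of A] unfolding maximal_def by auto
  then have "card S \<le> dim" using li_le_dim(2)[OF fin_dim] by auto
  then show ?thesis using rank_card_indpt[OF assms S] dim_is_n by simp
qed

lemma (in vec_space) rank_eq_nr_if_unit_vecs_in_cols:
  assumes "A \<in> carrier_mat n nc" "set (unit_vecs n) \<subseteq> set (cols A)"
  shows "rank A = n"
proof -
  let ?U = "set (unit_vecs n) :: 'a vec set"
  have "lin_indpt ?U" using unit_vecs_basis by (simp add: basis_def)
  then have "card ?U \<le> rank A" by (rule rank_ge_card_indpt[OF assms])
  moreover have "card ?U = n" by (simp add: distinct_card unit_vecs_distinct)
  ultimately show ?thesis using rank_le_nr[OF assms(1)] by simp
qed

lemma (in vec_space) rank_le_card_set_cols: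
  assumes "A \<in> carrier_mat n nc"
  shows "rank A \<le> card (set (cols A))"
proof -
  obtain S where S: "maximal S (\<lambda>T. T \<subseteq> set (cols A) \<and> lin_indpt T)"
    using maximal_indpt_subset_cols_exists by blast
  then have "card S \<le> card (set (cols A))" by (simp add: card_mono maximal_def)
  then show ?thesis using rank_card_indpt[OF assms S] by simp
qed

lemma mult_mat_vec_unit_vec:
  assumes "(A :: 'a :: semiring_1 mat) \<in> carrier_mat nr nc" "i < nc"
  shows "A *\<^sub>v unit_vec nc i = col A i"
  using assms by (intro eq_vecI) (auto simp: scalar_prod_right_unit[where n = nc])

lemma distinct_cols_if_kernel_trivial:
  fixes A :: "'a :: ring_1 mat"
  assumes A: "A \<in> carrier_mat n nc"
    and ker: "\<forall>v\<in>carrier_vec nc. A *\<^sub>v v = 0\<^sub>v n \<longrightarrow> v = 0\<^sub>v nc"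
  shows "distinct (cols A)"
proof (rule ccontr)
  assume "\<not> distinct (cols A)"
  then obtain i j where ij: "i < nc" "j < nc" "i \<noteq> j" "col A i = col A j"
    using A by (auto simp: distinct_conv_nth)
  define v :: "'a vec" where "v = unit_vec nc i - unit_vec nc j"
  have v: "v \<in> carrier_vec nc" by (simp add: v_def)
  have "A *\<^sub>v v = col A i - col A j"
    using A ij by (simp add: v_def mult_minus_distrib_mat_vec mult_mat_vec_unit_vec)
  also have "\<dots> = 0\<^sub>v n" using A ij by simp
  finally have "v = 0\<^sub>v nc" using ker v by blast
  moreover have "v $ i = 1" using ij by (simp add: v_def)
  ultimately show False using ij by simp
qed

lemma (in vec_space) rank_eq_nc_iff:
  assumes A: "A \<in> carrier_mat n nc"
  shows "rank A = nc \<longleftrightarrow> (\<forall>v\<in>carrier_vec nc. A *\<^sub>v v = 0\<^sub>v n \<longrightarrow> v = 0\<^sub>v nc)"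
proof
  assume rank: "rank A = nc"
  have "card (set (cols A)) \<le> length (cols A)" by (rule card_length)
  then have "card (set (cols A)) = length (cols A)"
    using rank_le_card_set_cols[OF A] rank A by simp
  then have distinct: "distinct (cols A)" by (simp add: card_distinct)
  show "\<forall>v\<in>carrier_vec nc. A *\<^sub>v v = 0\<^sub>v n \<longrightarrow> v = 0\<^sub>v nc"
    using lin_depI[OF A _ _ _ distinct] full_rank_lin_indpt[OF A rank distinct] by blast
next
  assume ker: "\<forall>v\<in>carrier_vec nc. A *\<^sub>v v = 0\<^sub>v n \<longrightarrow> v = 0\<^sub>v nc"
  have distinct: "distinct (cols A)" by (rule distinct_cols_if_kernel_trivial[OF A ker])
  have "lin_indpt (set (cols A))"
    using lin_depE[OF A _ distinct] ker by metis
  then show "rank A = nc" by (rule lin_indpt_full_rank[OF A distinct])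
qed

lemma vcat_carrier:
  "M1 \<in> carrier_mat r1 c \<Longrightarrow> M2 \<in> carrier_mat r2 c \<Longrightarrow> vcat M1 M2 \<in> carrier_mat (r1 + r2) c"
  using four_block_carrier_mat[of M1 r1 c "0\<^sub>m r2 0" r2 0 "0\<^sub>m r1 0" M2]
  by (simp add: vcat_def)

lemma mult_vcat_vec:
  assumes "M1 \<in> carrier_mat r1 c" "M2 \<in> carrier_mat r2 c" "x \<in> carrier_vec c"
  shows "vcat M1 M2 *\<^sub>v x = (M1 *\<^sub>v x) @\<^sub>v (M2 *\<^sub>v x)"
proof -
  let ?e = "vec 0 (\<lambda>_. 0) :: real vec"
  have "x @\<^sub>v ?e = x" using assms(3) by (intro eq_vecI) auto
  moreover have "M1 *\<^sub>v x \<in> carrier_vec r1" "M2 *\<^sub>v x \<in> carrier_vec r2"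
    using assms by (auto intro: mult_mat_vec_carrier)
  moreover have "\<And>r. 0\<^sub>m r 0 *\<^sub>v ?e = 0\<^sub>v r" by (intro eq_vecI) (auto simp: scalar_prod_def)
  ultimately show ?thesis
    using four_block_mat_mult_vec[OF assms(1) zero_carrier_mat assms(2) zero_carrier_mat assms(3),
        of ?e] assms(1,2)
    unfolding vcat_def by simp
qed

lemma mult_vcat_vec_eq_0_iff:
  assumes "M1 \<in> carrier_mat r1 c" "M2 \<in> carrier_mat r2 c" "x \<in> carrier_vec c"
  shows "vcat M1 M2 *\<^sub>v x = 0\<^sub>v (r1 + r2) \<longleftrightarrow> M1 *\<^sub>v x = 0\<^sub>v r1 \<and> M2 *\<^sub>v x = 0\<^sub>v r2"
proof -
  have "M1 *\<^sub>v x \<in> carrier_vec r1" using assms(1,3) by (rule mult_mat_vec_carrier)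
  moreover have "0\<^sub>v (r1 + r2) = 0\<^sub>v r1 @\<^sub>v (0\<^sub>v r2 :: real vec)" by auto
  ultimately show ?thesis
    unfolding mult_vcat_vec[OF assms] using append_vec_eq[of _ r1 "0\<^sub>v r1"] by simp
qed

lemma vcat_list_carrier:
  "\<forall>M\<in>set Ms. dim_col M = c \<Longrightarrow> vcat_list c Ms \<in> carrier_mat (\<Sum>M\<leftarrow>Ms. dim_row M) c"
proof (induction Ms)
  case Nil
  show ?case by (simp add: vcat_list_def)
next
  case (Cons M Ms)
  have "M \<in> carrier_mat (dim_row M) c" using Cons.prems by (intro carrier_matI) auto
  moreover have "vcat_list c Ms \<in> carrier_mat (\<Sum>M\<leftarrow>Ms. dim_row M) c"
    using Cons by simp
  ultimately have "vcat M (vcat_list c Ms) \<in> carrier_mat (dim_row M + (\<Sum>M\<leftarrow>Ms. dim_row M)) c"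
    by (rule vcat_carrier)
  then show ?case by (simp add: vcat_list_def)
qed

lemma mult_vcat_list_vec_eq_0_iff:
  assumes "\<forall>M\<in>set Ms. dim_col M = c" "x \<in> carrier_vec c"
  shows "vcat_list c Ms *\<^sub>v x = 0\<^sub>v (\<Sum>M\<leftarrow>Ms. dim_row M) \<longleftrightarrow> (\<forall>M\<in>set Ms. M *\<^sub>v x = 0\<^sub>v (dim_row M))"
  using assms(1)
proof (induction Ms)
  case Nil
  show ?case by (simp add: vcat_list_def vec_eq_iff)
next
  case (Cons M Ms)
  have "M \<in> carrier_mat (dim_row M) c" using Cons.prems by (intro carrier_matI) auto
  moreover have "vcat_list c Ms \<in> carrier_mat (\<Sum>M\<leftarrow>Ms. dim_row M) c"
    using Cons.prems by (intro vcat_list_carrier) simp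
  ultimately have "vcat M (vcat_list c Ms) *\<^sub>v x = 0\<^sub>v (dim_row M + (\<Sum>M\<leftarrow>Ms. dim_row M)) \<longleftrightarrow>
      M *\<^sub>v x = 0\<^sub>v (dim_row M) \<and> vcat_list c Ms *\<^sub>v x = 0\<^sub>v (\<Sum>M\<leftarrow>Ms. dim_row M)"
    using assms(2) by (rule mult_vcat_vec_eq_0_iff)
  then show ?case using Cons by (simp add: vcat_list_def)
qed

lemma hcat_carrier:
  "M1 \<in> carrier_mat r c1 \<Longrightarrow> M2 \<in> carrier_mat r c2 \<Longrightarrow> hcat M1 M2 \<in> carrier_mat r (c1 + c2)"
  using four_block_carrier_mat[of M1 r c1 "0\<^sub>m 0 c2" 0 c2 M2 "0\<^sub>m 0 c1"]
  by (simp add: hcat_def)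

lemma hcat_list_carrier:
  "\<forall>M\<in>set Ms. M \<in> carrier_mat r c \<Longrightarrow> hcat_list r Ms \<in> carrier_mat r (length Ms * c)"
proof (induction Ms)
  case (Cons M Ms)
  then have "hcat M (hcat_list r Ms) \<in> carrier_mat r (c + length Ms * c)"
    by (intro hcat_carrier) simp_all
  then show ?case by (simp add: hcat_list_def)
qed (simp add: hcat_list_def)

lemma index_hcat_list_blocks:
  assumes "\<forall>M\<in>set Ms. M \<in> carrier_mat r c" "i < r" "j < length Ms" "s < c"
  shows "hcat_list r Ms $$ (i, j * c + s) = (Ms ! j) $$ (i, s)"
  using assms
proof (induction Ms arbitrary: j)
  case (Cons M Ms)
  have M: "M \<in> carrier_mat r c" and H: "hcat_list r Ms \<in> carrier_mat r (length Ms * c)"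
    using Cons.prems(1) hcat_list_carrier[of Ms r c] by simp_all
  have "j \<le> length Ms" using Cons.prems(3) by simp
  then have "j * c + s < c + length Ms * c"
    using mult_le_mono1[of j "length Ms" c] Cons.prems(4) by linarith
  then have "hcat_list r (M # Ms) $$ (i, j * c + s)
      = (if j * c + s < c then M $$ (i, j * c + s) else hcat_list r Ms $$ (i, j * c + s - c))"
    using carrier_matD[OF M] carrier_matD[OF H] Cons.prems(2)
    by (simp add: hcat_list_def hcat_def)
  also have "\<dots> = ((M # Ms) ! j) $$ (i, s)"
  proof (cases j)
    case (Suc j')
    then have "j * c + s - c = j' * c + s" by simp
    then show ?thesis using Suc Cons by simp
  qed (use Cons.prems(4) in simp)
  finally show ?case .
qed simp

lemma foldr_plus_carrier_mat:
  "\<forall>M\<in>set L. M \<in> carrier_mat nr nc \<Longrightarrow> foldr (+) L (0\<^sub>m nr nc) \<in> carrier_mat nr nc"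
  by (induction L) auto

lemma index_foldr_plus_mat:
  "\<forall>M\<in>set L. M \<in> carrier_mat nr nc \<Longrightarrow> a < nr \<Longrightarrow> b < nc \<Longrightarrow>
    foldr (+) L (0\<^sub>m nr nc) $$ (a, b) = (\<Sum>M\<leftarrow>L. M $$ (a, b))"
proof (induction L)
  case (Cons M L)
  then have "foldr (+) L (0\<^sub>m nr nc) \<in> carrier_mat nr nc" by (intro foldr_plus_carrier_mat) simp
  then show ?case using Cons by simp
qed simp

lemma controllable_one_mat:
  assumes A: "A \<in> carrier_mat N N"
  shows "controllable A (1\<^sub>m N)"
proof -
  define Ms where "Ms = map (\<lambda>k. A ^\<^sub>m k * 1\<^sub>m N) [0..<N]"
  define K where "K = hcat_list N Ms"
  have Ms: "\<forall>M\<in>set Ms. M \<in> carrier_mat N N" using A by (auto simp: Ms_def)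
  have "length Ms = N" by (simp add: Ms_def)
  then have K: "K \<in> carrier_mat N (N * N)" unfolding K_def using hcat_list_carrier[OF Ms] by simp
  have "unit_vec N j \<in> set (cols K)" if j: "j < N" for j
  proof -
    have jN: "j < N * N" using j by (simp add: less_le_trans[OF j])
    have "K $$ (i, j) = 1\<^sub>m N $$ (i, j)" if "i < N" for i
    proof -
      have "K $$ (i, 0 * N + j) = (Ms ! 0) $$ (i, j)"
        unfolding K_def using Ms that j by (intro index_hcat_list_blocks) (simp_all add: Ms_def)
      also have "Ms ! 0 = 1\<^sub>m N" using j A by (simp add: Ms_def)
      finally show ?thesis by simp
    qed
    then have "col K j = unit_vec N j" using K j jN by (intro eq_vecI) auto
    moreover have "col K j \<in> set (cols K)" using nth_mem[of j "cols K"] K jN by simp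
    ultimately show ?thesis by simp
  qed
  then have "set (unit_vecs N) \<subseteq> set (cols K)" by (auto simp: unit_vecs_def)
  then have "vec_space.rank N K = N" using K by (intro vec_space.rank_eq_nr_if_unit_vecs_in_cols)
  then show ?thesis using A by (simp add: controllable_def K_def Ms_def)
qed

lemma observable_iff_kernel:
  assumes A: "A \<in> carrier_mat N N" and C: "dim_col C = N"
  shows "observable C A \<longleftrightarrow>
    (\<forall>v\<in>carrier_vec N. (\<forall>k<N. C *\<^sub>v (A ^\<^sub>m k *\<^sub>v v) = 0\<^sub>v (dim_row C)) \<longrightarrow> v = 0\<^sub>v N)"
proof -
  define Ms where "Ms = map (\<lambda>k. C * A ^\<^sub>m k) [0..<N]"
  define Ob where "Ob = vcat_list N Ms"
  have cols: "\<forall>M\<in>set Ms. dim_col M = N" using A by (auto simp: Ms_def)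
  then have Ob: "Ob \<in> carrier_mat (\<Sum>M\<leftarrow>Ms. dim_row M) N"
    unfolding Ob_def by (rule vcat_list_carrier)
  have "Ob *\<^sub>v v = 0\<^sub>v (\<Sum>M\<leftarrow>Ms. dim_row M) \<longleftrightarrow> (\<forall>k<N. C *\<^sub>v (A ^\<^sub>m k *\<^sub>v v) = 0\<^sub>v (dim_row C))"
    if v: "v \<in> carrier_vec N" for v
  proof -
    have "\<And>k. (C * A ^\<^sub>m k) *\<^sub>v v = C *\<^sub>v (A ^\<^sub>m k *\<^sub>v v)"
      using A C v by (intro assoc_mult_mat_vec) auto
    then show ?thesis
      unfolding Ob_def mult_vcat_list_vec_eq_0_iff[OF cols v] by (auto simp: Ms_def)
  qed
  moreover have "observable C A \<longleftrightarrow> vec_space.rank (\<Sum>M\<leftarrow>Ms. dim_row M) Ob = N"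
    using A Ob by (simp add: observable_def Ob_def Ms_def)
  ultimately show ?thesis using vec_space.rank_eq_nc_iff[OF Ob] by simp
qed

lemma jointly_observable_iff_kernel:
  assumes A: "A \<in> carrier_mat N N" and C: "\<forall>i<m. dim_col (C i) = N"
  shows "jointly_observable A C m \<longleftrightarrow> (\<forall>v\<in>carrier_vec N.
    (\<forall>i<m. \<forall>k<N. C i *\<^sub>v (A ^\<^sub>m k *\<^sub>v v) = 0\<^sub>v (dim_row (C i))) \<longrightarrow> v = 0\<^sub>v N)"
proof -
  define C0 where "C0 = vcat_list N (map C [0..<m])"
  have cols: "\<forall>M\<in>set (map C [0..<m]). dim_col M = N" using C by auto
  then have C0: "C0 \<in> carrier_mat (\<Sum>M\<leftarrow>map C [0..<m]. dim_row M) N"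
    unfolding C0_def by (rule vcat_list_carrier)
  have "C0 *\<^sub>v w = 0\<^sub>v (dim_row C0) \<longleftrightarrow> (\<forall>i<m. C i *\<^sub>v w = 0\<^sub>v (dim_row (C i)))"
    if "w \<in> carrier_vec N" for w
    using C0 mult_vcat_list_vec_eq_0_iff[OF cols that] by (auto simp: C0_def)
  moreover have "A ^\<^sub>m k *\<^sub>v v \<in> carrier_vec N" if "v \<in> carrier_vec N" for k v
    using A that by (blast intro: mult_mat_vec_carrier pow_carrier_mat)
  ultimately show ?thesis
    unfolding jointly_observable_def A[THEN carrier_matD(2)] C0_def[symmetric]
    using observable_iff_kernel[OF A] C0 by auto
qed

section \<open>Consensus vectors\<close>

definition vec_block :: "nat \<Rightarrow> nat \<Rightarrow> 'a vec \<Rightarrow> 'a vec" where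
  "vec_block n i y = vec n (\<lambda>s. y $ (i * n + s))"

definition vec_repeat :: "nat \<Rightarrow> nat \<Rightarrow> 'a vec \<Rightarrow> 'a vec" where
  "vec_repeat n m z = vec (n * m) (\<lambda>c. z $ (c mod n))"

lemma vec_repeat_carrier [simp]: "vec_repeat n m z \<in> carrier_vec (n * m)"
  by (simp add: vec_repeat_def)

lemma index_vec_repeat_blocks [simp]:
  "i < m \<Longrightarrow> t < n \<Longrightarrow> vec_repeat n m z $ (i * n + t) = z $ t"
  by (simp add: vec_repeat_def block_index_less)

lemma vec_repeat_zero [simp]: "vec_repeat n m (0\<^sub>v n) = 0\<^sub>v (n * m)"
  by (rule eq_vec_blocksI[OF vec_repeat_carrier]) (simp_all add: block_index_less)

lemma vec_block_vec_repeat: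
  "i < m \<Longrightarrow> z \<in> carrier_vec n \<Longrightarrow> vec_block n i (vec_repeat n m z) = z"
  by (intro eq_vecI) (simp_all add: vec_block_def)

lemma vec_eq_vec_repeat:
  assumes "v \<in> carrier_vec (n * m)" "\<And>i. i < m \<Longrightarrow> vec_block n i v = z"
  shows "v = vec_repeat n m z"
proof (rule eq_vec_blocksI[OF assms(1) vec_repeat_carrier])
  fix i t assume "i < m" "t < n"
  then show "v $ (i * n + t) = vec_repeat n m z $ (i * n + t)"
    using assms(2)[of i, symmetric] by (simp add: vec_block_def)
qed

lemma mult_vec_repeat:
  assumes "dim_col M = n * m" "r < dim_row M" "z \<in> carrier_vec n"
  shows "(M *\<^sub>v vec_repeat n m z) $ r = (\<Sum>s<n. (\<Sum>j<m. M $$ (r, j * n + s)) * z $ s)"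
proof -
  have "(M *\<^sub>v vec_repeat n m z) $ r
      = (\<Sum>j<m. \<Sum>s<n. M $$ (r, j * n + s) * vec_repeat n m z $ (j * n + s))"
    using assms(1,2) by (rule mult_mat_vec_blocks[OF _ vec_repeat_carrier])
  also have "\<dots> = (\<Sum>j<m. \<Sum>s<n. M $$ (r, j * n + s) * z $ s)"
    by (intro sum.cong refl) simp
  also have "\<dots> = (\<Sum>s<n. (\<Sum>j<m. M $$ (r, j * n + s)) * z $ s)"
    by (subst sum.swap) (simp add: sum_distrib_right)
  finally show ?thesis .
qed

lemma strongly_connected_eq:
  assumes "strongly_connected m nbr" "\<And>i j. i < m \<Longrightarrow> j \<in> nbr i \<Longrightarrow> f j = f i"
    and "i < m" "j < m"
  shows "f i = f j"
proof -
  have "(i, j) \<in> (nbr_arcs m nbr)\<^sup>*" using assms(1,3,4) by (simp add: strongly_connected_def)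
  then show ?thesis
  proof (induction rule: rtrancl_induct)
    case (step b c)
    then show ?case using assms(2)[of c b] by (simp add: nbr_arcs_def)
  qed simp
qed

section \<open>The augmented system\<close>

lemma unitv_carrier: "unitv m i \<in> carrier_mat m 1"
  by (simp add: unitv_def)

lemma tB_carrier: "tB n m i \<in> carrier_mat (n * m) n"
  using kron_carrier[of "unitv m i" "1\<^sub>m n"] by (simp add: tB_def unitv_def mult.commute)

lemma tB_index_blocks:
  assumes "j < m" "s < n" "t < n"
  shows "tB n m i $$ (j * n + s, t) = (if j = i \<and> s = t then 1 else 0)"
proof -
  have "tB n m i $$ (j * n + s, 0 * n + t) = unitv m i $$ (j, 0) * 1\<^sub>m n $$ (s, t)"
    unfolding tB_def using assms by (intro kron_index_blocks[OF unitv_carrier one_carrier_mat]) auto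
  then show ?thesis using assms by (simp add: unitv_def)
qed

lemma hcat_list_tB: "hcat_list (n * m) (map (tB n m) [0..<m]) = 1\<^sub>m (n * m)"
proof -
  have Ms: "\<forall>M\<in>set (map (tB n m) [0..<m]). M \<in> carrier_mat (n * m) n" using tB_carrier by auto
  then have K: "hcat_list (n * m) (map (tB n m) [0..<m]) \<in> carrier_mat (n * m) (n * m)"
    using hcat_list_carrier[OF Ms] by (simp add: mult.commute)
  show ?thesis
  proof (rule eq_matI)
    fix r c assume "r < dim_row (1\<^sub>m (n * m))" "c < dim_col (1\<^sub>m (n * m))"
    then obtain i t j s where "i < m" "t < n" "r = i * n + t" "j < m" "s < n" "c = j * n + s"
      by (auto elim!: block_indexE)
    then show "hcat_list (n * m) (map (tB n m) [0..<m]) $$ (r, c) = 1\<^sub>m (n * m) $$ (r, c)"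
      using index_hcat_list_blocks[OF Ms, of r j s]
      by (simp add: tB_index_blocks block_index_less block_index_eq_iff)
  qed (use K in simp_all)
qed

lemma transpose_tB_mult_vec:
  assumes "i < m" "y \<in> carrier_vec (n * m)"
  shows "transpose_mat (tB n m i) *\<^sub>v y = vec_block n i y"
proof (rule eq_vecI)
  fix t assume "t < dim_vec (vec_block n i y)"
  then have t: "t < n" by (simp add: vec_block_def)
  have "(transpose_mat (tB n m i) *\<^sub>v y) $ t
      = (\<Sum>j<m. \<Sum>s<n. transpose_mat (tB n m i) $$ (t, j * n + s) * y $ (j * n + s))"
    using tB_carrier[of n m i] assms(2) t by (intro mult_mat_vec_blocks) auto
  also have "\<dots> = (\<Sum>j<m. \<Sum>s<n. if j = i \<and> s = t then y $ (j * n + s) else 0)"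
    using t tB_carrier[of n m i]
    by (intro sum.cong refl) (simp add: tB_index_blocks block_index_less)
  also have "\<dots> = (\<Sum>j<m. if j = i then y $ (j * n + t) else 0)"
    using t by (intro sum.cong refl) auto
  also have "\<dots> = y $ (i * n + t)"
    using assms(1) by simp
  finally show "(transpose_mat (tB n m i) *\<^sub>v y) $ t = vec_block n i y $ t"
    using t by (simp add: vec_block_def)
qed (simp add: vec_block_def tB_carrier[THEN carrier_matD(2)])

lemma hC_carrier: "C i \<in> carrier_mat q n \<Longrightarrow> hC n m C i \<in> carrier_mat q (n * m)"
  using tB_carrier[of n m i] by (simp add: hC_def)

lemma hC_mult_vec_repeat:
  assumes "i < m" "C i \<in> carrier_mat q n" "w \<in> carrier_vec n"
  shows "hC n m C i *\<^sub>v vec_repeat n m w = C i *\<^sub>v w"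
proof -
  have "hC n m C i *\<^sub>v vec_repeat n m w = C i *\<^sub>v (transpose_mat (tB n m i) *\<^sub>v vec_repeat n m w)"
    unfolding hC_def using assms(2) tB_carrier[of n m i]
    by (intro assoc_mult_mat_vec) auto
  then show ?thesis
    using assms by (simp add: transpose_tB_mult_vec vec_block_vec_repeat)
qed

lemma Cij_carrier: "Cij n m i j \<in> carrier_mat n (n * m)"
  using kron_carrier[of "transpose_mat (unitv m i) - transpose_mat (unitv m j)" "1\<^sub>m n"]
  by (simp add: Cij_def unitv_def mult.commute)

lemma Cij_index_blocks:
  assumes "i < m" "j < m" "k < m" "t < n" "s < n"
  shows "Cij n m i j $$ (t, k * n + s)
    = (if s = t then (if k = i then 1 else 0) - (if k = j then 1 else 0) else 0)"
proof -
  have "transpose_mat (unitv m i) - transpose_mat (unitv m j) \<in> carrier_mat 1 m"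
    using unitv_carrier[of m i] unitv_carrier[of m j] by (intro minus_carrier_mat) auto
  then have "Cij n m i j $$ (0 * n + t, k * n + s)
      = (transpose_mat (unitv m i) - transpose_mat (unitv m j)) $$ (0, k) * 1\<^sub>m n $$ (t, s)"
    unfolding Cij_def using assms by (intro kron_index_blocks[OF _ one_carrier_mat]) auto
  then show ?thesis using assms by (simp add: unitv_def)
qed

lemma Cij_mult_vec:
  assumes "i < m" "j < m" "y \<in> carrier_vec (n * m)"
  shows "Cij n m i j *\<^sub>v y = vec_block n i y - vec_block n j y"
proof (rule eq_vecI)
  fix t assume "t < dim_vec (vec_block n i y - vec_block n j y)"
  then have t: "t < n" by (simp add: vec_block_def)
  have "(Cij n m i j *\<^sub>v y) $ t = (\<Sum>k<m. \<Sum>s<n. Cij n m i j $$ (t, k * n + s) * y $ (k * n + s))"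
    using Cij_carrier[of n m i j] assms(3) t by (intro mult_mat_vec_blocks) auto
  also have "\<dots> = (\<Sum>k<m. \<Sum>s<n. if s = t then
      ((if k = i then 1 else 0) - (if k = j then 1 else 0)) * y $ (k * n + s) else 0)"
    using assms t by (intro sum.cong refl) (simp add: Cij_index_blocks)
  also have "\<dots> = (\<Sum>k<m. (if k = i then y $ (k * n + t) else 0) - (if k = j then y $ (k * n + t) else 0))"
    using t by (intro sum.cong refl) (simp add: left_diff_distrib)
  also have "\<dots> = y $ (i * n + t) - y $ (j * n + t)"
    using assms(1,2) by (simp add: sum_subtractf)
  finally show "(Cij n m i j *\<^sub>v y) $ t = (vec_block n i y - vec_block n j y) $ t"
    using t by (simp add: vec_block_def)
qed (simp add: vec_block_def Cij_carrier[THEN carrier_matD(1)])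

lemma tC_carrier: "tC n m nbr i \<in> carrier_mat (dim_row (tC n m nbr i)) (n * m)"
proof -
  have "\<forall>M\<in>set (map (Cij n m i) (sorted_list_of_set (nbr i))). dim_col M = n * m"
    by (simp add: Cij_carrier[THEN carrier_matD(2)])
  from vcat_list_carrier[OF this] have "dim_col (tC n m nbr i) = n * m"
    unfolding tC_def by (rule carrier_matD(2))
  then show ?thesis by (rule carrier_matI[OF refl])
qed

lemma tC_mult_vec_eq_0_iff:
  assumes "nbr i \<subseteq> {0..<m}" "i < m" "y \<in> carrier_vec (n * m)"
  shows "tC n m nbr i *\<^sub>v y = 0\<^sub>v (dim_row (tC n m nbr i))
    \<longleftrightarrow> (\<forall>j\<in>nbr i. vec_block n j y = vec_block n i y)"
proof -
  define Ms where "Ms = map (Cij n m i) (sorted_list_of_set (nbr i))"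
  have fin: "finite (nbr i)" using assms(1) finite_subset by blast
  have cols: "\<forall>M\<in>set Ms. dim_col M = n * m"
    by (simp add: Ms_def Cij_carrier[THEN carrier_matD(2)])
  have "dim_row (tC n m nbr i) = (\<Sum>M\<leftarrow>Ms. dim_row M)"
    using vcat_list_carrier[OF cols] by (simp add: tC_def Ms_def)
  then have "tC n m nbr i *\<^sub>v y = 0\<^sub>v (dim_row (tC n m nbr i))
      \<longleftrightarrow> (\<forall>j\<in>nbr i. Cij n m i j *\<^sub>v y = 0\<^sub>v n)"
    using mult_vcat_list_vec_eq_0_iff[OF cols assms(3)] fin
    by (simp add: tC_def Ms_def Cij_carrier[THEN carrier_matD(1)])
  also have "\<dots> \<longleftrightarrow> (\<forall>j\<in>nbr i. vec_block n j y = vec_block n i y)"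
  proof -
    have "Cij n m i j *\<^sub>v y = 0\<^sub>v n \<longleftrightarrow> vec_block n j y = vec_block n i y" if "j \<in> nbr i" for j
    proof -
      have "j < m" using assms(1) that by auto
      then have "Cij n m i j *\<^sub>v y = vec_block n i y - vec_block n j y"
        using assms(2,3) by (intro Cij_mult_vec)
      then show ?thesis by (auto simp: vec_block_def vec_eq_iff)
    qed
    then show ?thesis by blast
  qed
  finally show ?thesis .
qed

lemma tC_kernel_eq_vec_repeat:
  assumes nbr: "\<And>i. i < m \<Longrightarrow> nbr i \<subseteq> {0..<m}" and sc: "strongly_connected m nbr"
    and v: "v \<in> carrier_vec (n * m)"
    and ker: "\<And>i. i < m \<Longrightarrow> tC n m nbr i *\<^sub>v v = 0\<^sub>v (dim_row (tC n m nbr i))"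
  shows "v = vec_repeat n m (vec_block n 0 v)"
proof (rule vec_eq_vec_repeat[OF v])
  fix i assume i: "i < m"
  have "vec_block n j v = vec_block n i v" if "i < m" "j \<in> nbr i" for i j
    using tC_mult_vec_eq_0_iff[where nbr = nbr, OF nbr[OF that(1)] that(1) v] ker[OF that(1)] that(2) by blast
  then show "vec_block n i v = vec_block n 0 v"
    using strongly_connected_eq[OF sc, of "\<lambda>i. vec_block n i v"] i by blast
qed

lemma tA_carrier: "tA n m A B F \<in> carrier_mat (n * m) (n * m)"
  unfolding tA_def by (intro minus_carrier_mat) simp

lemma tA_index_blocks:
  assumes A: "A \<in> carrier_mat n n" and BF: "\<And>j. j < m \<Longrightarrow> B j * F j \<in> carrier_mat n n"
    and "i < m" "t < n" "j < m" "s < n"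
  shows "tA n m A B F $$ (i * n + t, j * n + s)
    = (if i = j then A $$ (t, s) + (\<Sum>k<m. (B k * F k) $$ (t, s)) else 0) - (B j * F j) $$ (t, s)"
proof -
  define S where "S = foldr (+) (map (\<lambda>j. B j * F j) [0..<m]) (0\<^sub>m n n)"
  have L: "\<forall>M\<in>set (map (\<lambda>j. B j * F j) [0..<m]). M \<in> carrier_mat n n" using BF by auto
  have S: "S \<in> carrier_mat n n" unfolding S_def using L by (rule foldr_plus_carrier_mat)
  have "S $$ (t, s) = (\<Sum>k<m. (B k * F k) $$ (t, s))"
    using index_foldr_plus_mat[OF L] assms(4,6)
    by (simp add: S_def sum_list_sum_nth atLeast0LessThan)
  moreover have "kron (1\<^sub>m m) (A + S) $$ (i * n + t, j * n + s) = 1\<^sub>m m $$ (i, j) * (A + S) $$ (t, s)"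
    using A S assms(3-6) by (intro kron_index_blocks) auto
  ultimately show ?thesis
    using A S assms(3-6) block_index_less[of i m t n] block_index_less[of j m s n]
    by (simp add: tA_def S_def[symmetric])
qed

lemma tA_block_row_sum:
  assumes A: "A \<in> carrier_mat n n" and BF: "\<And>j. j < m \<Longrightarrow> B j * F j \<in> carrier_mat n n"
    and "i < m" "t < n" "s < n"
  shows "(\<Sum>j<m. tA n m A B F $$ (i * n + t, j * n + s)) = A $$ (t, s)"
  using assms by (simp add: tA_index_blocks sum_subtractf)

lemma tA_mult_vec_repeat:
  assumes A: "A \<in> carrier_mat n n" and BF: "\<And>j. j < m \<Longrightarrow> B j * F j \<in> carrier_mat n n"
    and z: "z \<in> carrier_vec n"
  shows "tA n m A B F *\<^sub>v vec_repeat n m z = vec_repeat n m (A *\<^sub>v z)"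
proof (rule eq_vec_blocksI)
  fix i t assume i: "i < m" and t: "t < n"
  have "(tA n m A B F *\<^sub>v vec_repeat n m z) $ (i * n + t)
      = (\<Sum>s<n. (\<Sum>j<m. tA n m A B F $$ (i * n + t, j * n + s)) * z $ s)"
    using tA_carrier[of n m A B F] z block_index_less[OF i t] by (intro mult_vec_repeat) auto
  also have "\<dots> = (\<Sum>s<n. A $$ (t, s) * z $ s)"
    using A BF i t by (simp add: tA_block_row_sum)
  also have "\<dots> = vec_repeat n m (A *\<^sub>v z) $ (i * n + t)"
    using A z i t by (simp add: scalar_prod_def atLeast0LessThan)
  finally show "(tA n m A B F *\<^sub>v vec_repeat n m z) $ (i * n + t) = vec_repeat n m (A *\<^sub>v z) $ (i * n + t)" .
qed (use tA_carrier[of n m A B F] in auto)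

lemma tA_pow_mult_vec_repeat:
  assumes A: "A \<in> carrier_mat n n" and BF: "\<And>j. j < m \<Longrightarrow> B j * F j \<in> carrier_mat n n"
    and z: "z \<in> carrier_vec n"
  shows "tA n m A B F ^\<^sub>m k *\<^sub>v vec_repeat n m z = vec_repeat n m (A ^\<^sub>m k *\<^sub>v z)"
  using z
proof (induction k arbitrary: z)
  case 0
  then show ?case using A tA_carrier[of n m A B F] by simp
next
  case (Suc k)
  have T: "tA n m A B F \<in> carrier_mat (n * m) (n * m)" by (rule tA_carrier)
  have "tA n m A B F ^\<^sub>m Suc k *\<^sub>v vec_repeat n m z
      = tA n m A B F ^\<^sub>m k *\<^sub>v (tA n m A B F *\<^sub>v vec_repeat n m z)"
    using T by (simp add: assoc_mult_mat_vec[of _ "n * m" "n * m"])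
  also have "\<dots> = vec_repeat n m (A ^\<^sub>m k *\<^sub>v (A *\<^sub>v z))"
    using Suc A BF by (simp add: tA_mult_vec_repeat)
  also have "A ^\<^sub>m k *\<^sub>v (A *\<^sub>v z) = A ^\<^sub>m Suc k *\<^sub>v z"
    using A Suc.prems by (simp add: assoc_mult_mat_vec[of _ n n])
  finally show ?case .
qed

lemma hC_tA_pow_mult_vec_repeat:
  assumes A: "A \<in> carrier_mat n n" and BF: "\<And>j. j < m \<Longrightarrow> B j * F j \<in> carrier_mat n n"
    and "i < m" "C i \<in> carrier_mat q n" "z \<in> carrier_vec n"
  shows "hC n m C i *\<^sub>v (tA n m A B F ^\<^sub>m k *\<^sub>v vec_repeat n m z) = C i *\<^sub>v (A ^\<^sub>m k *\<^sub>v z)"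
proof -
  have "A ^\<^sub>m k *\<^sub>v z \<in> carrier_vec n"
    using A assms(5) by (blast intro: mult_mat_vec_carrier pow_carrier_mat)
  then show ?thesis
    using assms by (simp add: tA_pow_mult_vec_repeat hC_mult_vec_repeat)
qed

lemma mult_vcat_hC_tC_eq_0_iff:
  assumes "C i \<in> carrier_mat q n" "w \<in> carrier_vec (n * m)"
  shows "vcat (hC n m C i) (tC n m nbr i) *\<^sub>v w = 0\<^sub>v (dim_row (vcat (hC n m C i) (tC n m nbr i)))
    \<longleftrightarrow> hC n m C i *\<^sub>v w = 0\<^sub>v q \<and> tC n m nbr i *\<^sub>v w = 0\<^sub>v (dim_row (tC n m nbr i))"
proof -
  have "vcat (hC n m C i) (tC n m nbr i) \<in> carrier_mat (q + dim_row (tC n m nbr i)) (n * m)"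
    using assms(1) by (intro vcat_carrier hC_carrier tC_carrier)
  then show ?thesis
    using mult_vcat_vec_eq_0_iff[OF hC_carrier[where C = C, OF assms(1)] tC_carrier assms(2)] by simp
qed

lemma jointly_observable_tA:
  assumes A: "A \<in> carrier_mat n n" and BF: "\<And>j. j < m \<Longrightarrow> B j * F j \<in> carrier_mat n n"
    and C: "\<And>i. i < m \<Longrightarrow> C i \<in> carrier_mat (q i) n"
    and nbr: "\<And>i. i < m \<Longrightarrow> nbr i \<subseteq> {0..<m}" and sc: "strongly_connected m nbr"
    and obs: "jointly_observable A C m"
  shows "jointly_observable (tA n m A B F) (\<lambda>i. vcat (hC n m C i) (tC n m nbr i)) m"
proof -
  let ?T = "tA n m A B F"
  have "\<forall>i<m. dim_col (C i) = n" using C carrier_matD(2) by blast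
  then have obs_C: "\<forall>z\<in>carrier_vec n.
      (\<forall>i<m. \<forall>k<n. C i *\<^sub>v (A ^\<^sub>m k *\<^sub>v z) = 0\<^sub>v (dim_row (C i))) \<longrightarrow> z = 0\<^sub>v n"
    using obs jointly_observable_iff_kernel[OF A] by blast
  show ?thesis
  proof (subst jointly_observable_iff_kernel[OF tA_carrier], safe)
    show "dim_col (vcat (hC n m C i) (tC n m nbr i)) = n * m" if "i < m" for i
      using vcat_carrier[OF hC_carrier[where C = C and m = m, OF C[OF that]] tC_carrier[of n m nbr i]] by simp
    fix v assume v: "v \<in> carrier_vec (n * m)"
      and "\<forall>i<m. \<forall>k<n * m. vcat (hC n m C i) (tC n m nbr i) *\<^sub>v (?T ^\<^sub>m k *\<^sub>v v)
        = 0\<^sub>v (dim_row (vcat (hC n m C i) (tC n m nbr i)))"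
    moreover have "?T ^\<^sub>m k *\<^sub>v v \<in> carrier_vec (n * m)" for k
      using tA_carrier v by (blast intro: mult_mat_vec_carrier pow_carrier_mat)
    ultimately have hC_ker: "hC n m C i *\<^sub>v (?T ^\<^sub>m k *\<^sub>v v) = 0\<^sub>v (q i)"
      and tC_ker: "tC n m nbr i *\<^sub>v (?T ^\<^sub>m k *\<^sub>v v) = 0\<^sub>v (dim_row (tC n m nbr i))"
      if "i < m" "k < n * m" for i k
      using that mult_vcat_hC_tC_eq_0_iff[where C = C, OF C[OF that(1)]] by blast+
    show "v = 0\<^sub>v (n * m)"
    proof (cases "n * m = 0")
      case True
      then show ?thesis using v by auto
    next
      case False
      define z where "z = vec_block n 0 v"
      have z: "z \<in> carrier_vec n" by (simp add: z_def vec_block_def)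
      have "dim_row ?T = n * m" using tA_carrier carrier_matD(1) by blast
      then have "tC n m nbr i *\<^sub>v v = 0\<^sub>v (dim_row (tC n m nbr i))" if "i < m" for i
        using tC_ker[OF that, of 0] False v by simp
      from tC_kernel_eq_vec_repeat[OF nbr sc v this] have v_eq: "v = vec_repeat n m z"
        by (simp add: z_def)
      have "C i *\<^sub>v (A ^\<^sub>m k *\<^sub>v z) = 0\<^sub>v (dim_row (C i))" if i: "i < m" and k: "k < n" for i k
        using hC_ker[OF i, of k] k i less_le_trans[of k n "n * m"] C[OF i] v_eq
          hC_tA_pow_mult_vec_repeat[where C = C, OF A BF i C[OF i] z] by simp
      then have "z = 0\<^sub>v n" using obs_C z by blast
      then show ?thesis using v_eq by simp
    qed
  qed
qed

theorem lemma1: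
  fixes n m :: nat and p q :: "nat \<Rightarrow> nat"
    and A :: "real mat" and B C F :: "nat \<Rightarrow> real mat"
    and nbr :: "nat \<Rightarrow> nat set"
  assumes "A \<in> carrier_mat n n"
    and "\<And>i. i < m \<Longrightarrow> B i \<in> carrier_mat n (p i)"
    and "\<And>i. i < m \<Longrightarrow> C i \<in> carrier_mat (q i) n"
    and "\<And>i. i < m \<Longrightarrow> F i \<in> carrier_mat (p i) n"
    and "\<And>i. i < m \<Longrightarrow> nbr i \<subseteq> {0..<m}"
    and "\<And>i. i < m \<Longrightarrow> i \<in> nbr i"
    and "jointly_controllable A B m"
    and "jointly_observable A C m"
    and "strongly_connected m nbr"
  shows "jointly_controllable (tA n m A B F) (tB n m) m
       \<and> jointly_observable (tA n m A B F) (\<lambda>i. vcat (hC n m C i) (tC n m nbr i)) m"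
proof
  have "controllable (tA n m A B F) (1\<^sub>m (n * m))"
    using tA_carrier by (rule controllable_one_mat)
  then show "jointly_controllable (tA n m A B F) (tB n m) m"
    using tA_carrier[of n m A B F] by (simp add: jointly_controllable_def hcat_list_tB)
next
  have "B j * F j \<in> carrier_mat n n" if "j < m" for j
    using assms(2,4)[OF that] by (rule mult_carrier_mat)
  then show "jointly_observable (tA n m A B F) (\<lambda>i. vcat (hC n m C i) (tC n m nbr i)) m"
    by (rule jointly_observable_tA[OF assms(1) _ assms(3,5,9,8)])
qed

end
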